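(* Let $F$ be a function from the pure states of $\mathcal{H}'$ to $[0,\infty)$ that is an ensemble Z$_2$-frameness monotone, i.e. for every pure state $|\psi\rangle$ and every Z$_2$-invariant measurement $\{\mathcal{E}_\mu\}$ such that each outcome $\mu$ with $w_\mu:=\mathrm{Tr}\,\mathcal{E}_\mu(|\psi\rangle\langle\psi|)>0$ satisfies $\mathcal{E}_\mu(|\psi\rangle\langle\psi|)=w_\mu|\phi_\mu\rangle\langle\phi_\mu|$ for a pure state $|\phi_\mu\rangle$, one has $\sum_\mu w_\mu F(|\phi_\mu\rangle)\le F(|\psi\rangle)$. Then there is a non-decreasing concave function $f:[0,1]\to\mathbb{R}$ such that $F(|\psi\rangle)=f(\mathcal{C}(|\psi\rangle))$ for every pure state $|\psi\rangle\in\mathcal{H}'$.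
   Context: $\mathcal{H}'$ is a two-dimensional Hilbert space with orthonormal basis $|0\rangle,|1\rangle$; $\pi=|0\rangle\langle0|-|1\rangle\langle1|$. A Z$_2$-invariant operation is a completely positive, trace-nonincreasing linear map $\mathcal{E}$ on operators on $\mathcal{H}'$ with $\mathcal{E}(\pi X\pi)=\pi\mathcal{E}(X)\pi$ for all $X$. A Z$_2$-invariant measurement is a (countable) family $\{\mathcal{E}_\mu\}$ of Z$_2$-invariant operations whose sum is trace-preserving. For a pure state $|\chi\rangle$, $\mathcal{C}(|\chi\rangle)=2\min\{|\langle0|\chi\rangle|^2,|\langle1|\chi\rangle|^2\}\in[0,1]$. *)

theory Defs
  imports "HOL-Analysis.Analysis"
begin

text \<open>Operators on the two-dimensional Hilbert space H' = C^2 with orthonormal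
basis |0>, |1> given by the indices (0::2), (1::2) of the numeral type 2.\<close>

type_synonym qvec = "complex ^ 2"
type_synonym qop = "complex ^ 2 ^ 2"

definition smat :: "complex \<Rightarrow> qop \<Rightarrow> qop" where
  "smat c A = (\<chi> i j. c * A $ i $ j)"

definition proj :: "qvec \<Rightarrow> qop" where
  "proj v = (\<chi> i j. v $ i * cnj (v $ j))"

definition piZ2 :: qop where
  "piZ2 = (\<chi> i j. if i = j then (if i = 0 then 1 else -1) else 0)"

text \<open>Positivity of an n x n block matrix with 2x2 blocks X i j (i,j < n),
i.e. of an operator on C^n (x) H'.  For n = 1 this is positivity of X 0 0.\<close>
definition block_psd :: "nat \<Rightarrow> (nat \<Rightarrow> nat \<Rightarrow> qop) \<Rightarrow> bool" where
  "block_psd n X \<longleftrightarrow> (\<forall>v :: nat \<Rightarrow> qvec.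
     (let s = (\<Sum>i<n. \<Sum>j<n. \<Sum>k\<in>UNIV. cnj (v i $ k) * ((X i j *v v j) $ k))
      in Im s = 0 \<and> 0 \<le> Re s))"

definition psd :: "qop \<Rightarrow> bool" where
  "psd A \<longleftrightarrow> (\<forall>v :: qvec. let s = (\<Sum>k\<in>UNIV. cnj (v $ k) * ((A *v v) $ k))
      in Im s = 0 \<and> 0 \<le> Re s)"

definition complex_linear_map :: "(qop \<Rightarrow> qop) \<Rightarrow> bool" where
  "complex_linear_map E \<longleftrightarrow>
     (\<forall>a b X Y. E (smat a X + smat b Y) = smat a (E X) + smat b (E Y))"

text \<open>Complete positivity: id_n (x) E is positive for every ancilla dimension n.\<close>
definition completely_positive :: "(qop \<Rightarrow> qop) \<Rightarrow> bool" where
  "completely_positive E \<longleftrightarrow>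
     (\<forall>n X. block_psd n X \<longrightarrow> block_psd n (\<lambda>i j. E (X i j)))"

definition trace_nonincreasing :: "(qop \<Rightarrow> qop) \<Rightarrow> bool" where
  "trace_nonincreasing E \<longleftrightarrow> (\<forall>X. psd X \<longrightarrow> Re (trace (E X)) \<le> Re (trace X))"

definition Z2_invariant_operation :: "(qop \<Rightarrow> qop) \<Rightarrow> bool" where
  "Z2_invariant_operation E \<longleftrightarrow>
     complex_linear_map E \<and> completely_positive E \<and> trace_nonincreasing E \<and>
     (\<forall>X. E (piZ2 ** X ** piZ2) = piZ2 ** E X ** piZ2)"

text \<open>A (countable) Z2-invariant measurement, indexed by nat (finite families
are padded with zero operations); the sum of the operations is trace preserving.\<close>
definition Z2_invariant_measurement :: "(nat \<Rightarrow> qop \<Rightarrow> qop) \<Rightarrow> bool" where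
  "Z2_invariant_measurement E \<longleftrightarrow>
     (\<forall>\<mu>. Z2_invariant_operation (E \<mu>)) \<and>
     (\<forall>X. (\<lambda>\<mu>. trace (E \<mu> X)) sums trace X)"

definition pure_state :: "qvec \<Rightarrow> bool" where
  "pure_state v \<longleftrightarrow> norm v = 1"

definition coh :: "qvec \<Rightarrow> real" where
  "coh x = 2 * min ((cmod (x $ 0))\<^sup>2) ((cmod (x $ 1))\<^sup>2)"

definition ensemble_Z2_frameness_monotone :: "(qvec \<Rightarrow> real) \<Rightarrow> bool" where
  "ensemble_Z2_frameness_monotone F \<longleftrightarrow>
     (\<forall>\<psi> E \<phi>. pure_state \<psi> \<longrightarrow> Z2_invariant_measurement E \<longrightarrow>
        (\<forall>\<mu>. 0 < Re (trace (E \<mu> (proj \<psi>))) \<longrightarrow>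
             pure_state (\<phi> \<mu>) \<and>
             E \<mu> (proj \<psi>) = smat (Re (trace (E \<mu> (proj \<psi>)))) (proj (\<phi> \<mu>))) \<longrightarrow>
        (\<forall>N. (\<Sum>\<mu><N. Re (trace (E \<mu> (proj \<psi>))) * F (\<phi> \<mu>)) \<le> F \<psi>))"

end

theory Submission
  imports Defs
begin

text \<open>Diagonal and antidiagonal Kraus operators commute with the Z2 action up to a sign, so
families of them with unit column weights form Z2-invariant measurements.  Diagonal unitaries
remove the phases of a pure state and the swap exchanges its amplitudes, hence
F \<psi> = g |\<langle>0|\<psi>\<rangle>|^2 with g t = F(\<surd>t|0\<rangle> + \<surd>(1-t)|1\<rangle>) and g (1 - t) = g t.  The diagonal
operators diag(\<surd>(q b/a), \<surd>(q (1-b)/(1-a))) steer the real state with parameter a to the one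
with parameter b with probability q; two of them, with q = p, 1 - p and p b0 + (1-p) b1 = a,
form a measurement, and monotonicity makes g concave.  A symmetric concave function is
non-decreasing on [0, 1/2], and C(\<psi>) = 2 min(t, 1 - t), so f c = g (c/2) works.\<close>

section \<open>Z2-covariant Kraus operators\<close>

lemma exhaust_2_zero_one: "(j :: 2) = 0 \<or> j = 1"
  using exhaust_2[of j] by auto

lemma UNIV_2_zero_one: "(UNIV :: 2 set) = {0, 1}"
  using exhaust_2_zero_one by auto

lemma sum_UNIV_2_zero_one: "sum f (UNIV :: 2 set) = f 0 + f 1"
  by (simp add: UNIV_2_zero_one)

lemma forall_2_zero_one: "(\<forall>i :: 2. P i) \<longleftrightarrow> P 0 \<and> P 1"
  by (metis UNIV_2_zero_one UNIV_I insertE singletonD)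

lemma vec_eq_2_iff: "(x :: 'a ^ 2) = y \<longleftrightarrow> x $ 0 = y $ 0 \<and> x $ 1 = y $ 1"
  by (simp add: vec_eq_iff forall_2_zero_one)

lemma mult_cnj_sandwich: "z * w * cnj z = w * (complex_of_real (cmod z))\<^sup>2"
proof -
  have "z * w * cnj z = w * (z * cnj z)"
    by (simp only: ac_simps)
  also have "z * cnj z = (complex_of_real (cmod z))\<^sup>2"
    by (simp only: of_real_power flip: complex_norm_square)
  finally show ?thesis .
qed

definition conj_transpose :: "qop \<Rightarrow> qop" where
  "conj_transpose K = (\<chi> i j. cnj (K $ j $ i))"

definition kraus_map :: "qop \<Rightarrow> qop \<Rightarrow> qop" where
  "kraus_map K X = K ** X ** conj_transpose K"

definition diag_or_antidiag :: "qop \<Rightarrow> bool" where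
  "diag_or_antidiag K \<longleftrightarrow> (K $ 0 $ 1 = 0 \<and> K $ 1 $ 0 = 0) \<or> (K $ 0 $ 0 = 0 \<and> K $ 1 $ 1 = 0)"

definition column_weight :: "qop \<Rightarrow> 2 \<Rightarrow> real" where
  "column_weight K j = (\<Sum>i\<in>UNIV. (cmod (K $ i $ j))\<^sup>2)"

lemma kraus_map_nth:
  "kraus_map K X $ i $ j =
     K $ i $ 0 * X $ 0 $ 0 * cnj (K $ j $ 0) + K $ i $ 0 * X $ 0 $ 1 * cnj (K $ j $ 1) +
     K $ i $ 1 * X $ 1 $ 0 * cnj (K $ j $ 0) + K $ i $ 1 * X $ 1 $ 1 * cnj (K $ j $ 1)"
  by (simp add: kraus_map_def conj_transpose_def matrix_matrix_mult_def sum_UNIV_2_zero_one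
      algebra_simps)

lemma kraus_map_zero [simp]: "kraus_map 0 X = 0"
  by (simp add: kraus_map_def)

lemma column_weight_nonneg: "0 \<le> column_weight K j"
  by (simp add: column_weight_def sum_nonneg)

lemma complex_linear_map_kraus_map: "complex_linear_map (kraus_map K)"
  by (simp add: complex_linear_map_def vec_eq_2_iff kraus_map_nth smat_def algebra_simps)

lemma quadratic_form_kraus_map:
  "(\<Sum>k\<in>UNIV. cnj (v $ k) * ((kraus_map K X *v u) $ k)) =
   (\<Sum>k\<in>UNIV. cnj ((conj_transpose K *v v) $ k) * ((X *v (conj_transpose K *v u)) $ k))"
  by (simp add: sum_UNIV_2_zero_one kraus_map_nth matrix_vector_mult_def conj_transpose_def
      algebra_simps)

lemma completely_positive_kraus_map: "completely_positive (kraus_map K)"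
  unfolding completely_positive_def block_psd_def
proof (intro allI impI)
  fix n X and v :: "nat \<Rightarrow> qvec"
  assume "\<forall>v :: nat \<Rightarrow> qvec.
     let s = \<Sum>i<n. \<Sum>j<n. \<Sum>k\<in>UNIV. cnj (v i $ k) * ((X i j *v v j) $ k) in Im s = 0 \<and> 0 \<le> Re s"
  from this[rule_format, of "\<lambda>i. conj_transpose K *v v i"]
  show "let s = \<Sum>i<n. \<Sum>j<n. \<Sum>k\<in>UNIV. cnj (v i $ k) * ((kraus_map K (X i j) *v v j) $ k)
    in Im s = 0 \<and> 0 \<le> Re s"
    by (simp only: quadratic_form_kraus_map)
qed

lemma trace_kraus_map:
  assumes "diag_or_antidiag K"
  shows "trace (kraus_map K X) = (\<Sum>j\<in>UNIV. of_real (column_weight K j) * X $ j $ j)"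
  using assms unfolding diag_or_antidiag_def column_weight_def trace_def
  by (auto simp: sum_UNIV_2_zero_one kraus_map_nth mult_cnj_sandwich)

lemma psd_diagonal_nonneg:
  assumes "psd X"
  shows "0 \<le> Re (X $ j $ j)"
proof -
  have "(X *v axis j 1) $ k = X $ k $ j" for k
    by (simp add: matrix_vector_mult_def axis_def mult.commute[of _ "if _ then _ else _"]
        if_distrib[of "\<lambda>x. x * _"] cong: if_cong)
  moreover have "cnj (axis j 1 $ k) = axis j 1 $ k" for k
    by (simp add: axis_def)
  ultimately have "(\<Sum>k\<in>UNIV. cnj (axis j 1 $ k) * ((X *v axis j 1) $ k)) = X $ j $ j"
    by (simp add: axis_def if_distrib[of "\<lambda>x. x * _"] cong: if_cong)
  moreover have "let s = \<Sum>k\<in>UNIV. cnj (axis j 1 $ k) * ((X *v axis j 1) $ k)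
      in Im s = 0 \<and> 0 \<le> Re s"
    using assms unfolding psd_def by (rule spec)
  ultimately show ?thesis
    by (simp add: Let_def)
qed

lemma trace_nonincreasing_kraus_map:
  assumes "diag_or_antidiag K" and "\<And>j. column_weight K j \<le> 1"
  shows "trace_nonincreasing (kraus_map K)"
  unfolding trace_nonincreasing_def
proof (intro allI impI)
  fix X assume "psd X"
  then have "column_weight K j * Re (X $ j $ j) \<le> Re (X $ j $ j)" for j
    using assms(2) psd_diagonal_nonneg column_weight_nonneg by (simp add: mult_left_le_one_le)
  then have "(\<Sum>j\<in>UNIV. column_weight K j * Re (X $ j $ j)) \<le> (\<Sum>j\<in>UNIV. Re (X $ j $ j))"
    by (rule sum_mono)
  moreover have "Re (trace (kraus_map K X)) = (\<Sum>j\<in>UNIV. column_weight K j * Re (X $ j $ j))"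
    by (simp add: trace_kraus_map[OF assms(1)])
  ultimately show "Re (trace (kraus_map K X)) \<le> Re (trace X)"
    by (simp add: trace_def)
qed

lemma piZ2_conjugate_nth:
  "(piZ2 ** X ** piZ2) $ i $ j = (if i = 0 then 1 else -1) * (if j = 0 then 1 else -1) * X $ i $ j"
  using UNIV_2_zero_one by (auto simp: piZ2_def matrix_matrix_mult_def sum_UNIV_2_zero_one)

lemma kraus_map_piZ2_covariant:
  "diag_or_antidiag K \<Longrightarrow> kraus_map K (piZ2 ** X ** piZ2) = piZ2 ** kraus_map K X ** piZ2"
  unfolding diag_or_antidiag_def
  by (auto simp: vec_eq_2_iff piZ2_conjugate_nth kraus_map_nth algebra_simps)

lemma Z2_invariant_operation_kraus_map:
  "diag_or_antidiag K \<Longrightarrow> (\<And>j. column_weight K j \<le> 1) \<Longrightarrow> Z2_invariant_operation (kraus_map K)"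
  unfolding Z2_invariant_operation_def
  using complex_linear_map_kraus_map completely_positive_kraus_map
    trace_nonincreasing_kraus_map kraus_map_piZ2_covariant by blast

section \<open>Measurements with finitely many Kraus operators\<close>

definition kraus_measurement :: "nat \<Rightarrow> (nat \<Rightarrow> qop) \<Rightarrow> nat \<Rightarrow> qop \<Rightarrow> qop" where
  "kraus_measurement n K \<mu> = kraus_map (if \<mu> < n then K \<mu> else 0)"

lemma Z2_invariant_measurement_kraus:
  assumes K: "\<And>\<mu>. \<mu> < n \<Longrightarrow> diag_or_antidiag (K \<mu>)"
    and complete: "\<And>j. (\<Sum>\<mu><n. column_weight (K \<mu>) j) = 1"
  shows "Z2_invariant_measurement (kraus_measurement n K)"
  unfolding Z2_invariant_measurement_def
proof (intro conjI allI)
  fix \<mu>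
  have "column_weight (K \<mu>) j \<le> 1" if "\<mu> < n" for j
    using member_le_sum[of \<mu> "{..<n}" "\<lambda>\<mu>. column_weight (K \<mu>) j"] that complete[of j]
      column_weight_nonneg by auto
  then show "Z2_invariant_operation (kraus_measurement n K \<mu>)"
    using K by (auto simp: kraus_measurement_def diag_or_antidiag_def column_weight_def
        intro!: Z2_invariant_operation_kraus_map)
next
  fix X
  have "(\<lambda>\<mu>. trace (kraus_measurement n K \<mu> X)) sums (\<Sum>\<mu><n. trace (kraus_measurement n K \<mu> X))"
    by (rule sums_finite) (simp_all add: kraus_measurement_def trace_def)
  also have "(\<Sum>\<mu><n. trace (kraus_measurement n K \<mu> X)) =
      (\<Sum>\<mu><n. \<Sum>j\<in>UNIV. of_real (column_weight (K \<mu>) j) * X $ j $ j)"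
    by (simp add: kraus_measurement_def trace_kraus_map K)
  also have "\<dots> = (\<Sum>j\<in>UNIV. \<Sum>\<mu><n. of_real (column_weight (K \<mu>) j) * X $ j $ j)"
    by (rule sum.swap)
  also have "\<dots> = (\<Sum>j\<in>UNIV. of_real (\<Sum>\<mu><n. column_weight (K \<mu>) j) * X $ j $ j)"
    by (simp add: sum_distrib_right)
  also have "\<dots> = trace X"
    by (simp add: complete trace_def)
  finally show "(\<lambda>\<mu>. trace (kraus_measurement n K \<mu> X)) sums trace X" .
qed

lemma pure_state_iff: "pure_state x \<longleftrightarrow> (cmod (x $ 0))\<^sup>2 + (cmod (x $ 1))\<^sup>2 = 1"
  by (simp add: pure_state_def norm_vec_def L2_set_def sum_UNIV_2_zero_one)

lemma proj_matrix_vector_mult: "proj (K *v x) = kraus_map K (proj x)"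
  by (simp add: vec_eq_2_iff proj_def kraus_map_nth matrix_vector_mult_def sum_UNIV_2_zero_one
      algebra_simps)

lemma proj_scaleR: "proj (s *\<^sub>R x) = smat (of_real (s\<^sup>2)) (proj x)"
  by (simp add: vec_eq_2_iff proj_def smat_def scaleR_conv_of_real[where 'a = complex]
      power2_eq_square)

lemma trace_smat_proj:
  assumes "pure_state \<phi>"
  shows "trace (smat c (proj \<phi>)) = c"
proof -
  have "complex_of_real ((cmod (\<phi> $ 0))\<^sup>2 + (cmod (\<phi> $ 1))\<^sup>2) = 1"
    using assms by (simp add: pure_state_iff)
  then have "\<phi> $ 0 * cnj (\<phi> $ 0) + \<phi> $ 1 * cnj (\<phi> $ 1) = 1"
    by (simp only: of_real_add complex_norm_square)
  then show ?thesis
    by (simp add: trace_def sum_UNIV_2_zero_one smat_def proj_def flip: distrib_left)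
qed

lemma ensemble_monotone_kraus:
  fixes n :: nat
  assumes mon: "ensemble_Z2_frameness_monotone F" and psi: "pure_state \<psi>"
    and K: "\<And>\<mu>. \<mu> < n \<Longrightarrow> diag_or_antidiag (K \<mu>)"
      "\<And>j. (\<Sum>\<mu><n. column_weight (K \<mu>) j) = 1"
    and post: "\<And>\<mu>. \<mu> < n \<Longrightarrow> K \<mu> *v \<psi> = s \<mu> *\<^sub>R \<phi> \<mu> \<and> pure_state (\<phi> \<mu>)"
  shows "(\<Sum>\<mu><n. (s \<mu>)\<^sup>2 * F (\<phi> \<mu>)) \<le> F \<psi>"
proof -
  let ?E = "kraus_measurement n K"
  have outcome: "?E \<mu> (proj \<psi>) = smat (of_real ((s \<mu>)\<^sup>2)) (proj (\<phi> \<mu>))"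
    and weight: "Re (trace (?E \<mu> (proj \<psi>))) = (s \<mu>)\<^sup>2" if "\<mu> < n" for \<mu>
    using post[OF that] trace_smat_proj
    by (simp_all add: kraus_measurement_def that proj_scaleR flip: proj_matrix_vector_mult)
  have "pure_state (\<phi> \<mu>) \<and> ?E \<mu> (proj \<psi>) = smat (Re (trace (?E \<mu> (proj \<psi>)))) (proj (\<phi> \<mu>))"
    if "0 < Re (trace (?E \<mu> (proj \<psi>)))" for \<mu>
  proof (cases "\<mu> < n")
    case True
    then show ?thesis
      using post outcome weight by simp
  next
    case False
    then have "?E \<mu> (proj \<psi>) = 0"
      by (simp add: kraus_measurement_def)
    with that show ?thesis
      by (simp add: trace_def)
  qed
  then have "\<forall>\<mu>. 0 < Re (trace (?E \<mu> (proj \<psi>))) \<longrightarrow>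
      pure_state (\<phi> \<mu>) \<and> ?E \<mu> (proj \<psi>) = smat (Re (trace (?E \<mu> (proj \<psi>)))) (proj (\<phi> \<mu>))"
    by blast
  with mon psi Z2_invariant_measurement_kraus[OF K]
  have "(\<Sum>\<mu><n. Re (trace (?E \<mu> (proj \<psi>))) * F (\<phi> \<mu>)) \<le> F \<psi>"
    unfolding ensemble_Z2_frameness_monotone_def by blast
  then show ?thesis
    using weight by simp
qed

lemma monotone_under_unitary:
  assumes mon: "ensemble_Z2_frameness_monotone F" and psi: "pure_state \<psi>"
    and U: "diag_or_antidiag U" "\<And>j. column_weight U j = 1" and "pure_state (U *v \<psi>)"
  shows "F (U *v \<psi>) \<le> F \<psi>"
proof -
  have "(\<Sum>\<mu><1::nat. 1\<^sup>2 * F (U *v \<psi>)) \<le> F \<psi>"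
  proof (rule ensemble_monotone_kraus[OF mon psi, where K = "\<lambda>_. U" and \<phi> = "\<lambda>_. U *v \<psi>"])
    show "(\<Sum>\<mu><1::nat. column_weight U j) = 1" for j
      using U(2) by simp
  qed (use U(1) \<open>pure_state (U *v \<psi>)\<close> in auto)
  then show ?thesis
    by simp
qed

section \<open>Reduction to real states\<close>

lemma cis_Arg_mult_cmod: "cis (Arg z) * complex_of_real (cmod z) = z"
  using rcis_cmod_Arg[of z] by (simp add: rcis_def mult.commute)

lemma cis_minus_Arg_mult: "cis (- Arg z) * z = complex_of_real (cmod z)"
proof -
  have "cis (- Arg z) * z = cis (- Arg z) * (cis (Arg z) * complex_of_real (cmod z))"
    by (simp only: cis_Arg_mult_cmod)
  also have "\<dots> = complex_of_real (cmod z)"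
    by (simp add: mult.assoc[symmetric] cis_mult)
  finally show ?thesis .
qed

definition diag_mat :: "qvec \<Rightarrow> qop" where
  "diag_mat d = (\<chi> i j. if i = j then d $ i else 0)"

lemma diag_mat_mult: "diag_mat d *v x = (\<chi> i. d $ i * x $ i)"
  by (simp add: vec_eq_2_iff diag_mat_def matrix_vector_mult_def sum_UNIV_2_zero_one)

lemma diag_or_antidiag_diag_mat: "diag_or_antidiag (diag_mat d)"
  by (simp add: diag_or_antidiag_def diag_mat_def)

lemma column_weight_diag_mat: "column_weight (diag_mat d) j = (cmod (d $ j))\<^sup>2"
  using exhaust_2_zero_one[of j]
  by (auto simp: column_weight_def diag_mat_def sum_UNIV_2_zero_one)

definition real_state :: "real \<Rightarrow> qvec" where
  "real_state t = (\<chi> i. if i = 0 then of_real (sqrt t) else of_real (sqrt (1 - t)))"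

lemma real_state_nth [simp]:
  "real_state t $ 0 = of_real (sqrt t)" "real_state t $ 1 = of_real (sqrt (1 - t))"
  by (simp_all add: real_state_def)

lemma pure_state_real_state: "0 \<le> t \<Longrightarrow> t \<le> 1 \<Longrightarrow> pure_state (real_state t)"
  by (simp add: pure_state_iff)

lemma F_eq_F_real_state:
  assumes mon: "ensemble_Z2_frameness_monotone F" and psi: "pure_state \<psi>"
  shows "F \<psi> = F (real_state ((cmod (\<psi> $ 0))\<^sup>2))"
proof -
  let ?t = "(cmod (\<psi> $ 0))\<^sup>2"
  have norm: "?t + (cmod (\<psi> $ 1))\<^sup>2 = 1"
    using psi by (simp add: pure_state_iff)
  then have "1 - ?t = (cmod (\<psi> $ 1))\<^sup>2"
    by simp
  then have "sqrt (1 - ?t) = cmod (\<psi> $ 1)"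
    by simp
  then have modulus: "real_state ?t = (\<chi> i. of_real (cmod (\<psi> $ i)))"
    by (simp add: vec_eq_2_iff)
  have pure: "pure_state (real_state ?t)"
    using norm by (intro pure_state_real_state) (simp, smt (verit) zero_le_power2)
  have "F (real_state ?t) \<le> F \<psi>"
  proof -
    have "diag_mat (\<chi> i. cis (- Arg (\<psi> $ i))) *v \<psi> = real_state ?t"
      by (simp add: diag_mat_mult modulus cis_minus_Arg_mult)
    with monotone_under_unitary[OF mon psi, of "diag_mat (\<chi> i. cis (- Arg (\<psi> $ i)))"] pure
    show ?thesis
      by (simp add: diag_or_antidiag_diag_mat column_weight_diag_mat)
  qed
  moreover have "F \<psi> \<le> F (real_state ?t)"
  proof -
    have "diag_mat (\<chi> i. cis (Arg (\<psi> $ i))) *v real_state ?t = \<psi>"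
      by (simp add: diag_mat_mult modulus cis_Arg_mult_cmod)
    with monotone_under_unitary[OF mon pure, of "diag_mat (\<chi> i. cis (Arg (\<psi> $ i)))"] psi
    show ?thesis
      by (simp add: diag_or_antidiag_diag_mat column_weight_diag_mat)
  qed
  ultimately show ?thesis
    by simp
qed

definition swap_op :: qop where
  "swap_op = (\<chi> i j. if i = j then 0 else 1)"

lemma F_real_state_flip:
  assumes mon: "ensemble_Z2_frameness_monotone F" and t: "0 \<le> t" "t \<le> 1"
  shows "F (real_state (1 - t)) = F (real_state t)"
proof -
  have swap: "swap_op *v real_state s = real_state (1 - s)" for s
    by (simp add: vec_eq_2_iff swap_op_def matrix_vector_mult_def sum_UNIV_2_zero_one)
  have unitary: "diag_or_antidiag swap_op" "column_weight swap_op j = 1" for j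
    using exhaust_2_zero_one[of j]
    by (auto simp: diag_or_antidiag_def swap_op_def column_weight_def sum_UNIV_2_zero_one)
  have "F (real_state (1 - s)) \<le> F (real_state s)" if "0 \<le> s" "s \<le> 1" for s
    using monotone_under_unitary[OF mon pure_state_real_state[OF that] unitary] that
    by (simp add: swap pure_state_real_state)
  from this[of t] this[of "1 - t"] t show ?thesis
    by simp
qed

definition transfer_op :: "real \<Rightarrow> real \<Rightarrow> real \<Rightarrow> qop" where
  "transfer_op a b q =
     diag_mat (\<chi> i. of_real (if i = 0 then sqrt (q * b / a) else sqrt (q * (1 - b) / (1 - a))))"

lemma diag_or_antidiag_transfer_op: "diag_or_antidiag (transfer_op a b q)"
  by (simp add: transfer_op_def diag_or_antidiag_diag_mat)

lemma transfer_op_mult_real_state: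
  assumes "0 < a" "a < 1" "0 \<le> q" "0 \<le> b" "b \<le> 1"
  shows "transfer_op a b q *v real_state a = sqrt q *\<^sub>R real_state b"
proof -
  have "sqrt (u / c) * sqrt c = sqrt u" if "0 < c" for u c :: real
    using that by (simp flip: real_sqrt_mult)
  then show ?thesis
    using assms
    by (simp add: transfer_op_def diag_mat_mult vec_eq_2_iff scaleR_conv_of_real[where 'a = complex]
        real_sqrt_mult flip: of_real_mult)
qed

lemma column_weight_transfer_op:
  assumes "0 < a" "a < 1" "0 \<le> q" "0 \<le> b" "b \<le> 1"
  shows "column_weight (transfer_op a b q) 0 = q * b / a"
    and "column_weight (transfer_op a b q) 1 = q * (1 - b) / (1 - a)"
  using assms by (simp_all add: transfer_op_def column_weight_diag_mat)

lemma F_real_state_split: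
  assumes mon: "ensemble_Z2_frameness_monotone F"
    and a: "0 < a" "a < 1" and p: "0 < p" "p < 1"
    and b: "0 \<le> b0" "b0 \<le> 1" "0 \<le> b1" "b1 \<le> 1" and mean: "p * b0 + (1 - p) * b1 = a"
  shows "p * F (real_state b0) + (1 - p) * F (real_state b1) \<le> F (real_state a)"
proof -
  define K where "K \<mu> = (if \<mu> = 0 then transfer_op a b0 p else transfer_op a b1 (1 - p))"
    for \<mu> :: nat
  have "(\<Sum>\<mu><2::nat. (if \<mu> = 0 then sqrt p else sqrt (1 - p))\<^sup>2 *
      F (real_state (if \<mu> = 0 then b0 else b1))) \<le> F (real_state a)"
  proof (rule ensemble_monotone_kraus[OF mon pure_state_real_state, where K = K])
    show "(\<Sum>\<mu><2::nat. column_weight (K \<mu>) j) = 1" for j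
    proof -
      have "p * (1 - b0) + (1 - p) * (1 - b1) = 1 - a"
        using mean by argo
      then have "p * (1 - b0) / (1 - a) + (1 - p) * (1 - b1) / (1 - a) = 1"
        using a unfolding add_divide_distrib[symmetric] by simp
      moreover have "p * b0 / a + (1 - p) * b1 / a = 1"
        using a unfolding add_divide_distrib[symmetric] mean by simp
      ultimately show ?thesis
        using exhaust_2_zero_one[of j] a p b
        by (auto simp: K_def numeral_2_eq_2 column_weight_transfer_op)
    qed
  qed (use a p b in \<open>auto simp: K_def diag_or_antidiag_transfer_op
      transfer_op_mult_real_state pure_state_real_state\<close>)
  then show ?thesis
    using p by (simp add: numeral_2_eq_2)
qed


section \<open>Symmetric concave functions on the unit interval\<close>

lemma concave_on_unit_intervalI:
  fixes g :: "real \<Rightarrow> real"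
  assumes "\<And>p x y. 0 < p \<Longrightarrow> p < 1 \<Longrightarrow> x \<in> {0..1} \<Longrightarrow> y \<in> {0..1} \<Longrightarrow>
      0 < p * x + (1 - p) * y \<Longrightarrow> p * x + (1 - p) * y < 1 \<Longrightarrow>
      p * g x + (1 - p) * g y \<le> g (p * x + (1 - p) * y)"
  shows "concave_on {0..1} g"
proof (rule concave_on_linorderI)
  fix t x y :: real
  assume t: "0 < t" "t < 1" and xy: "x \<in> {0..1}" "y \<in> {0..1}" "x < y"
  have "0 < t * (y - x)" "0 < (1 - t) * (y - x)"
    using t xy(3) by simp_all
  then have "x < (1 - t) * x + t * y" "(1 - t) * x + t * y < y"
    by (simp_all add: algebra_simps)
  then show "(1 - t) * g x + t * g y \<le> g ((1 - t) *\<^sub>R x + t *\<^sub>R y)"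
    using assms[of "1 - t" x y] t xy by auto
qed simp

lemma concave_on_scale:
  fixes g :: "real \<Rightarrow> real"
  assumes "concave_on S g" and "convex T" and "\<And>x. x \<in> T \<Longrightarrow> c * x \<in> S"
  shows "concave_on T (\<lambda>x. g (c * x))"
  unfolding concave_on_iff
proof (intro conjI ballI allI impI)
  fix x y u v :: real
  assume "x \<in> T" "y \<in> T" "0 \<le> u" "0 \<le> v" "u + v = 1"
  then have "u * g (c * x) + v * g (c * y) \<le> g (u *\<^sub>R (c * x) + v *\<^sub>R (c * y))"
    using assms(1,3) unfolding concave_on_iff by blast
  then show "u * g (c * x) + v * g (c * y) \<le> g (c * (u *\<^sub>R x + v *\<^sub>R y))"
    by (simp add: algebra_simps)
qed (rule assms(2))

lemma concave_symmetric_mono_on: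
  fixes g :: "real \<Rightarrow> real"
  assumes concave: "concave_on {0..1} g" and sym: "\<And>t. t \<in> {0..1} \<Longrightarrow> g (1 - t) = g t"
  shows "mono_on {0..1/2} g"
proof (rule mono_onI)
  fix r s :: real
  assume rs: "r \<in> {0..1/2}" "s \<in> {0..1/2}" "r \<le> s"
  then have "concave_on {r..1 - r} g"
    using concave by (auto simp: concave_on_def intro: convex_on_subset)
  then have "min (g r) (g (1 - r)) \<le> g s"
    by (rule concave_on_ge_min) (use rs in auto)
  then show "g r \<le> g s"
    using sym[of r] rs by simp
qed

lemma coh_eq_min:
  assumes "pure_state \<psi>"
  shows "coh \<psi> = 2 * min ((cmod (\<psi> $ 0))\<^sup>2) (1 - (cmod (\<psi> $ 0))\<^sup>2)"
proof -
  have "(cmod (\<psi> $ 1))\<^sup>2 = 1 - (cmod (\<psi> $ 0))\<^sup>2"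
    using assms by (simp add: pure_state_iff)
  then show ?thesis
    by (simp add: coh_def)
qed

theorem theorem12:
  fixes F :: "qvec \<Rightarrow> real"
  assumes "\<forall>\<psi>. pure_state \<psi> \<longrightarrow> 0 \<le> F \<psi>"
    and "ensemble_Z2_frameness_monotone F"
  shows "\<exists>f :: real \<Rightarrow> real. mono_on {0..1} f \<and> concave_on {0..1} f \<and>
           (\<forall>\<psi>. pure_state \<psi> \<longrightarrow> F \<psi> = f (coh \<psi>))"
proof -
  note mon = assms(2)
  define g where "g t = F (real_state t)" for t
  have sym: "g (1 - t) = g t" if "t \<in> {0..1}" for t
    using F_real_state_flip[OF mon] that by (simp add: g_def)
  have concave: "concave_on {0..1} g"
    by (rule concave_on_unit_intervalI) (auto simp: g_def intro!: F_real_state_split[OF mon])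
  define f where "f c = g (c / 2)" for c
  have "mono_on {0..1} f"
    using concave_symmetric_mono_on[OF concave sym] by (auto simp: f_def mono_on_def)
  moreover have "concave_on {0..1} f"
    using concave_on_scale[OF concave, of "{0..1}" "1/2"] by (simp add: f_def[abs_def])
  moreover have "F \<psi> = f (coh \<psi>)" if psi: "pure_state \<psi>" for \<psi>
  proof -
    let ?t = "(cmod (\<psi> $ 0))\<^sup>2"
    have "F \<psi> = g ?t"
      using F_eq_F_real_state[OF mon psi] by (simp add: g_def)
    also have "\<dots> = g (min ?t (1 - ?t))"
    proof -
      have "?t \<le> 1"
        using psi zero_le_power2[of "cmod (\<psi> $ 1)"] unfolding pure_state_iff by linarith
      then show ?thesis
        using sym[of ?t] by (simp add: min_def)
    qed
    also have "\<dots> = f (coh \<psi>)"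
      by (simp add: f_def coh_eq_min[OF psi])
    finally show ?thesis .
  qed
  ultimately show ?thesis
    by blast
qed

end
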